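(* Let $d\in\mathbb{N}$. For every $N\in\mathbb{N}$ there is a polynomial $p_N$ of degree $N$ on $\mathbb{R}$ such that the following holds. For all $\varepsilon\in(0,1]$ and $y\in\mathbb{R}^d$ there is a linear operator $\Psi_{\varepsilon,y}:\mathbb{R}^{\binom{N+d}{N}}\to C_c^\infty(B_\varepsilon(y))$, $m\mapsto\Psi_{\varepsilon,y,m}$, such that $\int x^\alpha\Psi_{\varepsilon,y,m}(x)\,dx=m_\alpha$ for all multi-indices $|\alpha|\le N$, and $\|\Psi_{\varepsilon,y,m}\|_{L^\infty}\le\dfrac{p_N(|y|)}{\varepsilon^{d+N}}|m|$.
   Context: Vectors $m\in\mathbb{R}^{\binom{N+d}{N}}$ are indexed by the multi-indices $\alpha\in\mathbb{N}^d$ with $|\alpha|\le N$ (there are exactly $\binom{N+d}{N}$ of them), $m=(m_\alpha)_{|\alpha|\le N}$; $|m|$ is its Euclidean norm; $x^\alpha=\prod_ix_i^{\alpha_i}$; $C_c^\infty(B_\varepsilon(y))$ is the space of smooth functions compactly supported in the open ball $B_\varepsilon(y)$. *)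

theory Defs
  imports "HOL-Analysis.Analysis" "HOL-Computational_Algebra.Polynomial"
begin

text \<open>Multi-indices on R^d (d = CARD('n)) are functions 'n => nat.\<close>

definition mi_abs :: "('n::finite \<Rightarrow> nat) \<Rightarrow> nat" where
  "mi_abs \<alpha> = (\<Sum>i\<in>UNIV. \<alpha> i)"

definition mono_pow :: "real^'n::finite \<Rightarrow> ('n \<Rightarrow> nat) \<Rightarrow> real" where
  "mono_pow x \<alpha> = (\<Prod>i\<in>UNIV. (x $ i) ^ (\<alpha> i))"

definition mvec_norm :: "nat \<Rightarrow> (('n::finite \<Rightarrow> nat) \<Rightarrow> real) \<Rightarrow> real" where
  "mvec_norm N m = sqrt (\<Sum>\<alpha>\<in>{\<alpha>. mi_abs \<alpha> \<le> N}. (m \<alpha>)^2)"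

text \<open>C^infinity: all iterated partial derivatives exist and are continuous.\<close>
definition smooth_fun :: "(real^'n::finite \<Rightarrow> real) \<Rightarrow> bool" where
  "smooth_fun f \<longleftrightarrow> (\<exists>F. f \<in> F \<and> (\<forall>g\<in>F. continuous_on UNIV g \<and>
      (\<forall>i. \<exists>h\<in>F. \<forall>x. ((\<lambda>t. g (x + t *\<^sub>R axis i 1)) has_real_derivative h x) (at 0))))"

definition Cc_inf :: "(real^'n::finite) set \<Rightarrow> (real^'n \<Rightarrow> real) set" where
  "Cc_inf U = {f. smooth_fun f \<and> (\<exists>K. compact K \<and> K \<subseteq> U \<and> (\<forall>x. x \<notin> K \<longrightarrow> f x = 0))}"

end

theory Submission
  imports Defs
begin

(* Start from a smooth bump supported in [1/4, 3/4], built from t |-> exp (-1/t); all its moments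
   are positive. Replacing f(t) by f(t) - 2^(k+1) f(2t) multiplies the j-th moment by 1 - 2^(k-j),
   so removing every k <= N other than l and normalising gives a profile phi_l with
   int t^j phi_l(t) dt = delta_jl for j <= N. For a multi-index beta, the product over i of
   r^-(beta_i+1) phi_(beta_i)((x_i - y_i)/r) has the moments of delta_beta about y and lives in the
   cube y + [0, 3r/4]^d, which lies in the ball of radius eps around y for r = eps/d. Expanding
   x^alpha = ((x - y) + y)^alpha relates moments about 0 and moments about y by a triangular
   binomial matrix whose inverse is the same matrix for -y; applying this inverse to m gives the
   coefficients of Psi m. The matrix entries are O((1 + |y|)^N) and each tensor product is
   O(r^-(d+N)), which yields the bound. *)

section \<open>Smoothness through derivative-closed families\<close>

inductive_set sums_of_products :: "('a \<Rightarrow> real) set \<Rightarrow> ('a \<Rightarrow> real) set \<Rightarrow> ('a \<Rightarrow> real) set"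
  for F G where
  product: "f \<in> F \<Longrightarrow> g \<in> G \<Longrightarrow> (\<lambda>x. f x * g x) \<in> sums_of_products F G"
| sum: "u \<in> sums_of_products F G \<Longrightarrow> v \<in> sums_of_products F G \<Longrightarrow>
    (\<lambda>x. u x + v x) \<in> sums_of_products F G"

locale derivative_rules =
  fixes D :: "'i \<Rightarrow> ('a::topological_space \<Rightarrow> real) \<Rightarrow> ('a \<Rightarrow> real) \<Rightarrow> bool"
  assumes D_const: "D i (\<lambda>x. c) (\<lambda>x. 0)"
    and D_add: "D i f f' \<Longrightarrow> D i g g' \<Longrightarrow> D i (\<lambda>x. f x + g x) (\<lambda>x. f' x + g' x)"
    and D_mult: "D i f f' \<Longrightarrow> D i g g' \<Longrightarrow> D i (\<lambda>x. f x * g x) (\<lambda>x. f' x * g x + f x * g' x)"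
begin

definition derivative_closed :: "('a \<Rightarrow> real) set \<Rightarrow> bool" where
  "derivative_closed F \<longleftrightarrow> (\<forall>g\<in>F. continuous_on UNIV g \<and> (\<forall>i. \<exists>g'\<in>F. D i g g'))"

definition smooth :: "('a \<Rightarrow> real) \<Rightarrow> bool" where
  "smooth f \<longleftrightarrow> (\<exists>F. f \<in> F \<and> derivative_closed F)"

lemma smoothI: "f \<in> F \<Longrightarrow> derivative_closed F \<Longrightarrow> smooth f"
  unfolding smooth_def by blast

lemma smooth_continuous: "smooth f \<Longrightarrow> continuous_on UNIV f"
  by (auto simp: smooth_def derivative_closed_def)

lemma smooth_const: "smooth (\<lambda>x. c)"
  unfolding smooth_def derivative_closed_def
  by (rule exI[of _ "{\<lambda>x. c, \<lambda>x. 0}"]) (auto intro: D_const)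

lemma smooth_add:
  assumes "smooth f" "smooth g"
  shows "smooth (\<lambda>x. f x + g x)"
proof -
  obtain F G where F: "f \<in> F" "derivative_closed F" and G: "g \<in> G" "derivative_closed G"
    using assms unfolding smooth_def by blast
  let ?H = "{\<lambda>x. u x + v x | u v. u \<in> F \<and> v \<in> G}"
  have "(\<lambda>x. f x + g x) \<in> ?H" using F G by blast
  moreover have "derivative_closed ?H"
    unfolding derivative_closed_def
  proof (intro ballI conjI allI)
    fix w i assume "w \<in> ?H"
    then obtain u v where w: "w = (\<lambda>x. u x + v x)" "u \<in> F" "v \<in> G" by blast
    obtain u' v' where "u' \<in> F" "D i u u'" "v' \<in> G" "D i v v'"
      using w F(2) G(2) unfolding derivative_closed_def by meson
    then show "\<exists>w'\<in>?H. D i w w'" unfolding w(1) using D_add by blast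
    have "continuous_on UNIV u" "continuous_on UNIV v"
      using w F(2) G(2) unfolding derivative_closed_def by blast+
    then show "continuous_on UNIV w" unfolding w(1) by (rule continuous_on_add)
  qed
  ultimately show ?thesis by (rule smoothI)
qed

text \<open>By the Leibniz rule, the finite sums of products of two derivative-closed families
  form a derivative-closed family.\<close>
lemma smooth_mult:
  assumes "smooth f" "smooth g"
  shows "smooth (\<lambda>x. f x * g x)"
proof -
  obtain F G where F: "f \<in> F" "derivative_closed F" and G: "g \<in> G" "derivative_closed G"
    using assms unfolding smooth_def by blast
  have "continuous_on UNIV w \<and> (\<forall>i. \<exists>w'\<in>sums_of_products F G. D i w w')"
    if "w \<in> sums_of_products F G" for w
    using that
  proof induction
    case (product u v)
    have "\<exists>w'\<in>sums_of_products F G. D i (\<lambda>x. u x * v x) w'" for i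
    proof -
      obtain u' v' where u': "u' \<in> F" "D i u u'" and v': "v' \<in> G" "D i v v'"
        using product F(2) G(2) unfolding derivative_closed_def by meson
      have "(\<lambda>x. u' x * v x + u x * v' x) \<in> sums_of_products F G"
        using u' v' product by (intro sums_of_products.intros)
      then show ?thesis using D_mult[OF u'(2) v'(2)] by blast
    qed
    moreover have "continuous_on UNIV u" "continuous_on UNIV v"
      using product F(2) G(2) unfolding derivative_closed_def by blast+
    ultimately show ?case by (blast intro: continuous_on_mult)
  next
    case (sum u v)
    then show ?case by (blast intro: continuous_on_add D_add sums_of_products.sum)
  qed
  then have "derivative_closed (sums_of_products F G)"
    unfolding derivative_closed_def by blast
  with sums_of_products.product[OF F(1) G(1)] show ?thesis by (rule smoothI)
qed

lemma smooth_cmult: "smooth f \<Longrightarrow> smooth (\<lambda>x. c * f x)"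
  using smooth_mult[OF smooth_const] .

lemma smooth_sum: "finite A \<Longrightarrow> (\<And>a. a \<in> A \<Longrightarrow> smooth (f a)) \<Longrightarrow> smooth (\<lambda>x. \<Sum>a\<in>A. f a x)"
  by (induction A rule: finite_induct) (auto intro: smooth_const smooth_add)

lemma smooth_prod: "finite A \<Longrightarrow> (\<And>a. a \<in> A \<Longrightarrow> smooth (f a)) \<Longrightarrow> smooth (\<lambda>x. \<Prod>a\<in>A. f a x)"
  by (induction A rule: finite_induct) (auto intro: smooth_const smooth_mult)

end

definition has_deriv_everywhere :: "unit \<Rightarrow> (real \<Rightarrow> real) \<Rightarrow> (real \<Rightarrow> real) \<Rightarrow> bool" where
  "has_deriv_everywhere u f f' \<longleftrightarrow> (\<forall>x. (f has_real_derivative f' x) (at x))"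

definition has_partial_deriv :: "'n \<Rightarrow> (real^'n::finite \<Rightarrow> real) \<Rightarrow> (real^'n \<Rightarrow> real) \<Rightarrow> bool" where
  "has_partial_deriv i f f' \<longleftrightarrow>
     (\<forall>x. ((\<lambda>t. f (x + t *\<^sub>R axis i 1)) has_real_derivative f' x) (at 0))"

interpretation line: derivative_rules has_deriv_everywhere
  by standard (auto simp: has_deriv_everywhere_def intro!: derivative_eq_intros)

interpretation cart: derivative_rules has_partial_deriv
  by standard (auto simp: has_partial_deriv_def intro!: derivative_eq_intros)

lemma smooth_fun_iff_cart_smooth: "smooth_fun f \<longleftrightarrow> cart.smooth f"
  unfolding smooth_fun_def cart.smooth_def cart.derivative_closed_def has_partial_deriv_def
  by blast

lemma line_smooth_affine:
  assumes "line.smooth f"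
  shows "line.smooth (\<lambda>t. f (a * t + c))"
proof -
  obtain F where F: "f \<in> F" "line.derivative_closed F"
    using assms unfolding line.smooth_def by blast
  let ?H = "{\<lambda>t. b * g (a * t + c) | b g. g \<in> F}"
  have "(\<lambda>t. f (a * t + c)) \<in> ?H"
    using F(1) by (intro CollectI exI[of _ 1] exI[of _ f]) simp
  moreover have "line.derivative_closed ?H"
    unfolding line.derivative_closed_def
  proof (intro ballI conjI allI)
    fix u i assume "u \<in> ?H"
    then obtain b g where u: "u = (\<lambda>t. b * g (a * t + c))" "g \<in> F" by blast
    obtain g' where g': "g' \<in> F" "has_deriv_everywhere () g g'"
      using u(2) F(2) unfolding line.derivative_closed_def by blast
    have "((\<lambda>t. b * g (a * t + c)) has_real_derivative (b * a) * g' (a * x + c)) (at x)" for x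
      using g'(2) unfolding has_deriv_everywhere_def
      by (auto intro!: derivative_eq_intros DERIV_chain2[of g])
    then have "has_deriv_everywhere i u (\<lambda>t. (b * a) * g' (a * t + c))"
      unfolding has_deriv_everywhere_def u(1) by blast
    then show "\<exists>u'\<in>?H. has_deriv_everywhere i u u'" using g'(1) by blast
    have "continuous_on UNIV g" using u(2) F(2) unfolding line.derivative_closed_def by blast
    moreover have "continuous_on UNIV (\<lambda>t. a * t + c)" by (intro continuous_intros)
    ultimately have "continuous_on UNIV (\<lambda>t. g (a * t + c))"
      using continuous_on_compose2[of UNIV g UNIV "\<lambda>t. a * t + c"] by simp
    then show "continuous_on UNIV u" unfolding u(1) by (intro continuous_intros)
  qed
  ultimately show ?thesis by (rule line.smoothI)
qed

lemma has_partial_deriv_coordinate: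
  assumes "has_deriv_everywhere u g g'"
  shows "has_partial_deriv j (\<lambda>x::real^'n::finite. g (x $ i)) (if j = i then (\<lambda>x. g' (x $ i)) else (\<lambda>x. 0))"
proof (cases "j = i")
  case True
  have "((\<lambda>t. g (x $ i + t)) has_real_derivative g' (x $ i)) (at 0)" for x :: "real^'n"
    using DERIV_chain2[of g, OF _ DERIV_add[OF DERIV_const DERIV_ident]] assms
    unfolding has_deriv_everywhere_def by fastforce
  then show ?thesis using True unfolding has_partial_deriv_def by (simp add: axis_def)
qed (simp add: has_partial_deriv_def axis_def)

lemma cart_smooth_coordinate:
  assumes "line.smooth f"
  shows "cart.smooth (\<lambda>x::real^'n::finite. f (x $ i))"
proof -
  obtain F where F: "f \<in> F" "line.derivative_closed F"
    using assms unfolding line.smooth_def by blast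
  let ?H = "insert (\<lambda>x. 0) {\<lambda>x::real^'n. g (x $ i) | g. g \<in> F}"
  have "(\<lambda>x. f (x $ i)) \<in> ?H" using F(1) by blast
  moreover have "cart.derivative_closed ?H"
    unfolding cart.derivative_closed_def
  proof (intro ballI conjI allI)
    fix u j assume "u \<in> ?H"
    then consider "u = (\<lambda>x. 0)" | g where "u = (\<lambda>x. g (x $ i))" "g \<in> F" by blast
    then have "continuous_on UNIV u \<and> (\<exists>u'\<in>?H. has_partial_deriv j u u')"
    proof cases
      case 1
      then show ?thesis using cart.D_const[of j 0] by auto
    next
      case 2
      obtain g' where g': "g' \<in> F" "has_deriv_everywhere () g g'"
        using 2 F(2) unfolding line.derivative_closed_def by blast
      have "continuous_on UNIV g" using 2 F(2) unfolding line.derivative_closed_def by blast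
      then have "continuous_on UNIV u"
        unfolding 2 using continuous_on_compose2[of UNIV g UNIV "\<lambda>x::real^'n. x $ i"]
        by (simp add: continuous_on_component)
      then show ?thesis
        using has_partial_deriv_coordinate[OF g'(2), of j i] g'(1) unfolding 2 by (cases "j = i") auto
    qed
    then show "continuous_on UNIV u" "\<exists>u'\<in>?H. has_partial_deriv j u u'" by blast+
  qed
  ultimately show ?thesis by (rule cart.smoothI)
qed

section \<open>A flat bump and profiles with prescribed moments\<close>

lemma integrable_continuous_compact_support:
  fixes f :: "'a::euclidean_space \<Rightarrow> real"
  assumes "continuous_on UNIV f" "compact K" "\<And>x. x \<notin> K \<Longrightarrow> f x = 0"
  shows "integrable lborel f"
proof -
  have "f = (\<lambda>x. indicator K x *\<^sub>R f x)"
    using assms(3) by (auto simp: indicator_def fun_eq_iff)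
  with borel_integrable_compact[OF assms(2) continuous_on_subset[OF assms(1)]] show ?thesis
    by simp
qed

lemma lborel_integral_pos_continuous:
  fixes h :: "real \<Rightarrow> real"
  assumes "continuous_on UNIV h" "\<And>t. h t \<ge> 0" "integrable lborel h" "h a > 0"
  shows "(\<integral>t. h t \<partial>lborel) > 0"
proof -
  obtain d where d: "d > 0" "\<And>t. dist t a < d \<Longrightarrow> dist (h t) (h a) < h a / 2"
    using assms(1,4) unfolding continuous_on_eq_continuous_at[OF open_UNIV] continuous_at_eps_delta
    by (metis UNIV_I half_gt_zero)
  let ?I = "{a - d/2 .. a + d/2}"
  have below: "h a / 2 * indicator ?I t \<le> h t" for t
  proof (cases "t \<in> ?I")
    case True
    then have "\<bar>h t - h a\<bar> < h a / 2"
      using d by (auto simp: dist_real_def intro!: d(2))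
    then show ?thesis using True by (simp only: abs_less_iff) simp
  qed (use assms(2) in auto)
  have "0 < h a / 2 * d" using assms(4) d(1) by simp
  also have "\<dots> = (\<integral>t. h a / 2 * indicator ?I t \<partial>lborel)"
    using d(1) by simp
  also have "\<dots> \<le> (\<integral>t. h t \<partial>lborel)"
    using d(1) by (intro integral_mono below assms(3) integrable_mult_right integrable_real_indicator)
      (auto simp: emeasure_lborel_Icc_eq)
  finally show ?thesis .
qed

definition exp_recip :: "real poly \<Rightarrow> real \<Rightarrow> real" where
  "exp_recip P t = (if t > 0 then poly P (inverse t) * exp (- inverse t) else 0)"

lemma poly_times_exp_recip_tendsto_0:
  "((\<lambda>t. poly P (inverse t) * exp (- inverse t)) \<longlongrightarrow> (0::real)) (at_right 0)"
proof -
  have "((\<lambda>u. \<Sum>i\<le>degree P. coeff P i * (u ^ i / exp u)) \<longlongrightarrow> (\<Sum>i\<le>degree P. coeff P i * 0)) at_top"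
    by (intro tendsto_intros tendsto_power_div_exp_0)
  then have "((\<lambda>u. poly P u / exp u) \<longlongrightarrow> 0) at_top"
    by (simp add: poly_altdef sum_divide_distrib)
  then show ?thesis
    by (simp add: filterlim_at_top_to_right exp_minus divide_inverse)
qed

lemma exp_recip_has_real_derivative_0: "(exp_recip P has_real_derivative 0) (at 0)"
proof -
  have "((\<lambda>t. (exp_recip P t - exp_recip P 0) / (t - 0)) \<longlongrightarrow> 0) (at 0)"
  proof (rule filterlim_split_at)
    have "eventually (\<lambda>t. 0 = (exp_recip P t - exp_recip P 0) / (t - 0)) (at_left (0::real))"
      by (rule eventually_mono[OF eventually_at_left_real[of "-1"]]) (auto simp: exp_recip_def)
    then show "((\<lambda>t. (exp_recip P t - exp_recip P 0) / (t - 0)) \<longlongrightarrow> 0) (at_left 0)"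
      by (rule Lim_transform_eventually[OF tendsto_const])
    (* to the right of 0 the difference quotient is again of the form R(1/t) exp (-1/t) *)
    have "eventually (\<lambda>t. poly ([:0, 1:] * P) (inverse t) * exp (- inverse t)
        = (exp_recip P t - exp_recip P 0) / (t - 0)) (at_right (0::real))"
      by (rule eventually_mono[OF eventually_at_right_real[of _ 1]])
        (auto simp: exp_recip_def divide_inverse)
    then show "((\<lambda>t. (exp_recip P t - exp_recip P 0) / (t - 0)) \<longlongrightarrow> 0) (at_right 0)"
      by (rule Lim_transform_eventually[OF poly_times_exp_recip_tendsto_0])
  qed
  then show ?thesis by (simp add: has_field_derivative_iff)
qed

lemma exp_recip_has_real_derivative:
  "(exp_recip P has_real_derivative exp_recip ([:0, 0, 1:] * (P - pderiv P)) x) (at x)"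
proof -
  consider "x > 0" | "x < 0" | "x = 0" by linarith
  then show ?thesis
  proof cases
    case 1
    let ?D = "poly (pderiv P) (inverse x) * (- (inverse x ^ 2)) * exp (- inverse x)
      + poly P (inverse x) * (exp (- inverse x) * inverse x ^ 2)"
    have D: "((\<lambda>t. poly P (inverse t) * exp (- inverse t)) has_real_derivative ?D) (at x)"
      using 1 by (auto intro!: derivative_eq_intros DERIV_chain2[OF poly_DERIV] simp: power2_eq_square)
    have E: "?D = exp_recip ([:0, 0, 1:] * (P - pderiv P)) x"
      using 1 by (simp add: exp_recip_def algebra_simps power2_eq_square)
    show ?thesis using D[unfolded E]
      by (rule has_field_derivative_transform_within_open[where S="{0<..}"])
        (use 1 in \<open>auto simp: exp_recip_def\<close>)
  next
    case 2
    have "((\<lambda>t. 0) has_real_derivative exp_recip ([:0, 0, 1:] * (P - pderiv P)) x) (at x)"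
      using 2 by (simp add: exp_recip_def)
    then show ?thesis
      by (rule has_field_derivative_transform_within_open[where S="{..<0}"])
        (use 2 in \<open>auto simp: exp_recip_def\<close>)
  next
    case 3
    then show ?thesis using exp_recip_has_real_derivative_0 by (simp add: exp_recip_def)
  qed
qed

lemma line_smooth_exp_recip: "line.smooth (exp_recip P)"
proof (rule line.smoothI)
  show "line.derivative_closed (range exp_recip)"
    unfolding line.derivative_closed_def has_deriv_everywhere_def
    using exp_recip_has_real_derivative
    by (blast intro: continuous_at_imp_continuous_on DERIV_isCont)
qed simp

lemma exp_recip_1_pos: "t > 0 \<Longrightarrow> exp_recip 1 t > 0"
  and exp_recip_1_nonneg: "exp_recip 1 t \<ge> 0"
  and exp_recip_nonpos: "t \<le> 0 \<Longrightarrow> exp_recip P t = 0"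
  by (auto simp: exp_recip_def)

text \<open>Support in \<open>[0, 3/4]\<close> rather than \<open>[0, 1]\<close> keeps the rescaled tensor products inside a
  compact subset of the open ball.\<close>
definition profile :: "(real \<Rightarrow> real) \<Rightarrow> bool" where
  "profile f \<longleftrightarrow> line.smooth f \<and> (\<forall>t. t \<notin> {0..3/4} \<longrightarrow> f t = 0)"

definition moment :: "nat \<Rightarrow> (real \<Rightarrow> real) \<Rightarrow> real" where
  "moment j f = (\<integral>t. t ^ j * f t \<partial>lborel)"

lemma profile_continuous: "profile f \<Longrightarrow> continuous_on UNIV f"
  unfolding profile_def using line.smooth_continuous by blast

lemma profile_moment_integrable:
  assumes "profile f"
  shows "integrable lborel (\<lambda>t. t ^ j * f t)"
proof (rule integrable_continuous_compact_support[of _ "{0..3/4}"])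
  show "continuous_on UNIV (\<lambda>t. t ^ j * f t)"
    using profile_continuous[OF assms] by (auto intro!: continuous_intros)
qed (use assms in \<open>auto simp: profile_def\<close>)

lemma profile_bounded:
  assumes "profile f"
  shows "\<exists>C. \<forall>t. \<bar>f t\<bar> \<le> C"
proof -
  have "compact (f ` {0..3/4})"
    by (rule compact_continuous_image[OF continuous_on_subset[OF profile_continuous[OF assms]]])
      auto
  then have "bounded (f ` {0..3/4})" by (rule compact_imp_bounded)
  then obtain C where C: "\<forall>y\<in>f ` {0..3/4}. norm y \<le> C" unfolding bounded_iff by blast
  have "\<bar>f t\<bar> \<le> max C 0" for t
  proof (cases "t \<in> {0..3/4}")
    case True
    then have "norm (f t) \<le> C" using C by blast
    then show ?thesis by simp
  qed (use assms in \<open>simp add: profile_def\<close>)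
  then show ?thesis by blast
qed

lemma profile_cmult: "profile f \<Longrightarrow> profile (\<lambda>t. c * f t)"
  unfolding profile_def by (auto intro: line.smooth_cmult)

lemma moment_cmult: "moment j (\<lambda>t. c * f t) = c * moment j f"
  unfolding moment_def by (simp add: mult.left_commute)

lemma moment_rescale:
  assumes "c > 0"
  shows "moment j (\<lambda>t. f (c * t)) = moment j f / c ^ Suc j"
proof -
  have "moment j f = c * (\<integral>x. (c * x) ^ j * f (c * x) \<partial>lborel)"
    unfolding moment_def using lborel_integral_real_affine[of c "\<lambda>t. t ^ j * f t" 0] assms by simp
  also have "\<dots> = c ^ Suc j * moment j (\<lambda>t. f (c * t))"
    unfolding moment_def by (simp add: power_mult_distrib mult.assoc)
  finally show ?thesis using assms by simp
qed

definition kill_moment :: "nat \<Rightarrow> (real \<Rightarrow> real) \<Rightarrow> real \<Rightarrow> real" where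
  "kill_moment k f t = f t - 2 ^ Suc k * f (2 * t)"

lemma profile_kill_moment:
  assumes "profile f"
  shows "profile (kill_moment k f)"
proof -
  have "line.smooth (\<lambda>t. f t + (- (2 ^ Suc k)) * f (2 * t + 0))"
    using assms unfolding profile_def
    by (intro line.smooth_add line.smooth_cmult line_smooth_affine) auto
  then show ?thesis
    using assms unfolding profile_def kill_moment_def by auto
qed

lemma moment_kill_moment:
  assumes "profile f"
  shows "moment j (kill_moment k f) = (1 - 2 ^ k / 2 ^ j) * moment j f"
proof -
  have "line.smooth (\<lambda>t. f (2 * t))"
    using line_smooth_affine[of f 2 0] assms by (simp add: profile_def)
  then have "profile (\<lambda>t. f (2 * t))"
    using assms by (auto simp: profile_def)
  then have "integrable lborel (\<lambda>t. t ^ j * f (2 * t))"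
    by (rule profile_moment_integrable)
  moreover have "(\<lambda>t. t ^ j * kill_moment k f t) = (\<lambda>t. t ^ j * f t - 2 ^ Suc k * (t ^ j * f (2 * t)))"
    by (simp add: fun_eq_iff kill_moment_def algebra_simps)
  ultimately have "moment j (kill_moment k f) = moment j f - 2 ^ Suc k * moment j (\<lambda>t. f (2 * t))"
    using profile_moment_integrable[OF assms] by (simp add: moment_def)
  also have "\<dots> = (1 - 2 ^ k / 2 ^ j) * moment j f"
    using moment_rescale[of 2 j f] by (simp add: field_simps)
  finally show ?thesis .
qed

definition kill_moments :: "nat list \<Rightarrow> (real \<Rightarrow> real) \<Rightarrow> real \<Rightarrow> real" where
  "kill_moments ks = foldr kill_moment ks"

lemma profile_kill_moments: "profile f \<Longrightarrow> profile (kill_moments ks f)"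
  unfolding kill_moments_def by (induction ks) (auto intro: profile_kill_moment)

lemma moment_kill_moments:
  "profile f \<Longrightarrow> moment j (kill_moments ks f) = (\<Prod>k\<leftarrow>ks. 1 - 2 ^ k / 2 ^ j) * moment j f"
proof (induction ks)
  case (Cons k ks)
  then show ?case
    using profile_kill_moments[OF Cons.prems, of ks]
    by (simp add: kill_moments_def moment_kill_moment)
qed (simp add: kill_moments_def)

definition bump :: "real \<Rightarrow> real" where
  "bump t = exp_recip 1 (t - 1/4) * exp_recip 1 (3/4 - t)"

lemma profile_bump: "profile bump"
proof -
  have bump_affine: "bump = (\<lambda>t. exp_recip 1 (1 * t + (- 1/4)) * exp_recip 1 ((- 1) * t + 3/4))"
    by (simp add: bump_def fun_eq_iff)
  have "line.smooth bump"
    unfolding bump_affine by (intro line.smooth_mult line_smooth_affine line_smooth_exp_recip)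
  then show ?thesis
    unfolding profile_def by (auto simp: bump_def exp_recip_nonpos)
qed

lemma moment_bump_pos: "moment j bump > 0"
  unfolding moment_def
proof (rule lborel_integral_pos_continuous[where a="1/2"])
  show "continuous_on UNIV (\<lambda>t. t ^ j * bump t)"
    using profile_continuous[OF profile_bump] by (intro continuous_intros)
  show "integrable lborel (\<lambda>t. t ^ j * bump t)"
    by (rule profile_moment_integrable[OF profile_bump])
  show "0 \<le> t ^ j * bump t" for t
    by (cases "t > 1/4")
      (auto simp: bump_def exp_recip_nonpos intro!: mult_nonneg_nonneg exp_recip_1_nonneg)
  show "0 < (1/2) ^ j * bump (1/2)"
    by (simp add: bump_def exp_recip_1_pos)
qed

definition dual_profile :: "nat \<Rightarrow> nat \<Rightarrow> real \<Rightarrow> real" where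
  "dual_profile N l =
    (let g = kill_moments [k \<leftarrow> [0..<Suc N]. k \<noteq> l] bump in (\<lambda>t. inverse (moment l g) * g t))"

lemma profile_dual_profile: "profile (dual_profile N l)"
  unfolding dual_profile_def Let_def by (intro profile_cmult profile_kill_moments profile_bump)

lemma moment_dual_profile:
  assumes "j \<le> N"
  shows "moment j (dual_profile N l) = (if j = l then 1 else 0)"
proof -
  define ks where "ks = [k \<leftarrow> [0..<Suc N]. k \<noteq> l]"
  have factor_zero_iff: "1 - 2 ^ k / 2 ^ j = (0::real) \<longleftrightarrow> k = j" for k
    by (auto simp: field_simps)
  have "(\<Prod>k\<leftarrow>ks. 1 - 2 ^ k / 2 ^ l) \<noteq> (0::real)"
    by (auto simp: ks_def prod_list_zero_iff factor_zero_iff simp del: upt_Suc)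
  then have "moment l (kill_moments ks bump) \<noteq> 0"
    using moment_bump_pos[of l] by (simp add: moment_kill_moments[OF profile_bump])
  moreover have "(\<Prod>k\<leftarrow>ks. 1 - 2 ^ k / 2 ^ j) = (0::real)" if "j \<noteq> l"
    using that assms by (auto simp: ks_def prod_list_zero_iff factor_zero_iff simp del: upt_Suc)
  ultimately show ?thesis
    unfolding dual_profile_def Let_def ks_def[symmetric] moment_cmult
    by (auto simp: moment_kill_moments[OF profile_bump] field_simps)
qed

lemma integral_power_translate_dual:
  assumes "profile \<phi>" and dual: "\<And>j. j \<le> a \<Longrightarrow> moment j \<phi> = (if j = b then 1 else 0)"
    and "r > 0"
  shows "(\<integral>t. t ^ a * (\<phi> ((t - c) / r) / r ^ Suc b) \<partial>lborel) = of_nat (a choose b) * c ^ (a - b)"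
proof -
  let ?G = "\<lambda>t. t ^ a * (\<phi> ((t - c) / r) / r ^ Suc b)"
  let ?coeff = "\<lambda>k. of_nat (a choose k) * r ^ k * c ^ (a - k) / r ^ Suc b"
  have expand: "?G (c + r * x) = (\<Sum>k\<le>a. ?coeff k * (x ^ k * \<phi> x))"
    for x
  proof -
    have "?G (c + r * x) = (r * x + c) ^ a * (\<phi> x / r ^ Suc b)"
      using \<open>r > 0\<close> by (simp add: add.commute)
    also have "\<dots> = (\<Sum>k\<le>a. of_nat (a choose k) * (r * x) ^ k * c ^ (a - k)) * (\<phi> x / r ^ Suc b)"
      by (simp add: binomial_ring)
    also have "\<dots> = (\<Sum>k\<le>a. ?coeff k * (x ^ k * \<phi> x))"
      by (subst sum_distrib_right) (rule sum.cong, simp_all add: power_mult_distrib field_simps)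
    finally show ?thesis .
  qed
  have "(\<integral>t. ?G t \<partial>lborel) = r * (\<integral>x. ?G (c + r * x) \<partial>lborel)"
    using lborel_integral_real_affine[of r ?G c] \<open>r > 0\<close> by simp
  also have "\<dots> = r * (\<Sum>k\<le>a. ?coeff k * moment k \<phi>)"
  proof -
    have "integrable lborel (\<lambda>x. ?coeff k * (x ^ k * \<phi> x))" if "k \<in> {..a}" for k
      by (intro integrable_mult_right profile_moment_integrable \<open>profile \<phi>\<close>)
    then show ?thesis
      unfolding expand moment_def by (subst Bochner_Integration.integral_sum) simp_all
  qed
  also have "\<dots> = r * (\<Sum>k\<le>a. if k = b then ?coeff k else 0)"
    by (intro arg_cong[where f="(*) r"] sum.cong) (auto simp: dual)
  also have "\<dots> = of_nat (a choose b) * c ^ (a - b)"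
    using \<open>r > 0\<close> by (auto simp: binomial_eq_0)
  finally show ?thesis .
qed

lemma binomial_inversion:
  fixes c :: "'a::comm_ring_1"
  shows "(\<Sum>b\<le>a. of_nat (a choose b) * c ^ (a - b) * (of_nat (b choose g) * (- c) ^ (b - g)))
    = (if a = g then 1 else 0)"
proof -
  define T where "T b = of_nat (a choose b) * c ^ (a - b) * (of_nat (b choose g) * (- c) ^ (b - g))" for b
  have T_zero: "T b = 0" if "b < g" for b
    using that by (simp add: T_def binomial_eq_0)
  show ?thesis
  proof (cases "g \<le> a")
    case False
    then have "(\<Sum>b\<le>a. T b) = 0" by (intro sum.neutral) (auto intro: T_zero)
    then show ?thesis using False unfolding T_def by simp
  next
    case True
    have "(\<Sum>b\<le>a. T b) = (\<Sum>b\<in>{g..a}. T b)"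
      by (rule sum.mono_neutral_right) (auto intro: T_zero)
    also have "\<dots> = (\<Sum>j\<le>a - g. T (j + g))"
      using sum.shift_bounds_cl_nat_ivl[of T 0 g "a - g"] True by (simp add: atLeast0AtMost)
    also have "\<dots> = (\<Sum>j\<le>a - g. of_nat (a choose g) * (of_nat ((a - g) choose j) * (- c) ^ j * c ^ (a - g - j)))"
    proof (rule sum.cong[OF refl])
      fix j assume "j \<in> {..a - g}"
      then have "(a choose (j + g)) * ((j + g) choose g) = (a choose g) * ((a - g) choose j)"
        using choose_mult[of g "j + g" a] True by simp
      then have choose_eq: "of_nat (a choose (j + g)) * of_nat ((j + g) choose g)
          = (of_nat (a choose g) * of_nat ((a - g) choose j) :: 'a)"
        by (metis of_nat_mult)
      have "T (j + g) = of_nat (a choose (j + g)) * of_nat ((j + g) choose g) * ((- c) ^ j * c ^ (a - g - j))"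
        unfolding T_def by (simp add: algebra_simps)
      then show "T (j + g) = of_nat (a choose g) * (of_nat ((a - g) choose j) * (- c) ^ j * c ^ (a - g - j))"
        unfolding choose_eq by (simp add: algebra_simps)
    qed
    also have "\<dots> = of_nat (a choose g) * (- c + c) ^ (a - g)"
      by (subst binomial_ring) (simp add: sum_distrib_left)
    also have "\<dots> = (if a = g then 1 else 0)"
      using True by (simp add: power_0_left)
    finally show ?thesis by (simp add: T_def)
  qed
qed

section \<open>Tensor products and moments of multi-indices\<close>

lemma integral_prod_Basis:
  fixes f :: "'a::euclidean_space \<Rightarrow> real \<Rightarrow> real"
  assumes int: "\<And>b. b \<in> Basis \<Longrightarrow> integrable lborel (f b)"
  shows "(\<integral>x. (\<Prod>b\<in>Basis. f b (x \<bullet> b)) \<partial>(lborel::'a measure)) = (\<Prod>b\<in>Basis. integral\<^sup>L lborel (f b))"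
proof -
  interpret product_sigma_finite "\<lambda>_::'a. lborel::real measure"
    by standard
  have [measurable]: "\<And>b. b \<in> Basis \<Longrightarrow> f b \<in> borel_measurable borel"
    using int by (simp add: borel_measurable_integrable)
  have "(\<integral>x. (\<Prod>b\<in>Basis. f b (x \<bullet> b)) \<partial>(lborel::'a measure))
      = (\<integral>g. (\<Prod>b\<in>Basis. f b ((\<Sum>b'\<in>Basis. g b' *\<^sub>R b') \<bullet> b)) \<partial>(\<Pi>\<^sub>M b\<in>Basis. lborel))"
    by (subst lborel_eq) (rule integral_distr; measurable)
  also have "\<dots> = (\<integral>g. (\<Prod>b\<in>Basis. f b (g b)) \<partial>(\<Pi>\<^sub>M b\<in>Basis. lborel))"
    by (intro Bochner_Integration.integral_cong prod.cong refl)
      (simp add: inner_sum_left inner_Basis if_distrib sum.delta cong: if_cong)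
  also have "\<dots> = (\<Prod>b\<in>Basis. integral\<^sup>L lborel (f b))"
    by (rule product_integral_prod) (auto intro: int)
  finally show ?thesis .
qed

lemma integral_prod_cart:
  fixes f :: "'n::finite \<Rightarrow> real \<Rightarrow> real"
  assumes "\<And>i. integrable lborel (f i)"
  shows "(\<integral>x. (\<Prod>i\<in>UNIV. f i (x $ i)) \<partial>(lborel::(real^'n) measure)) = (\<Prod>i\<in>UNIV. integral\<^sup>L lborel (f i))"
proof -
  have reindex: "(\<Prod>b\<in>Basis. G b) = (\<Prod>i\<in>UNIV. G (axis i 1))" for G :: "real^'n \<Rightarrow> real"
  proof -
    have B: "(Basis :: (real^'n) set) = (\<lambda>i. axis i 1) ` UNIV" by (auto simp: Basis_vec_def)
    have "inj (\<lambda>i::'n. axis i (1::real))" by (auto simp: inj_def axis_eq_axis)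
    then show ?thesis unfolding B by (subst prod.reindex) simp_all
  qed
  have "(\<integral>x. (\<Prod>b\<in>Basis. f (axis_index b) (x \<bullet> b)) \<partial>(lborel::(real^'n) measure))
      = (\<Prod>b\<in>(Basis :: (real^'n) set). integral\<^sup>L lborel (f (axis_index b)))"
    by (intro integral_prod_Basis assms)
  then show ?thesis unfolding reindex by (simp add: cart_eq_inner_axis)
qed

definition multi_indices :: "nat \<Rightarrow> ('n::finite \<Rightarrow> nat) set" where
  "multi_indices N = {\<alpha>. mi_abs \<alpha> \<le> N}"

lemma multi_indices_le: "\<alpha> \<in> multi_indices N \<Longrightarrow> \<alpha> i \<le> N"
  unfolding multi_indices_def mi_abs_def
  using member_le_sum[of i UNIV \<alpha>] by simp

lemma finite_multi_indices: "finite (multi_indices N)"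
proof (rule finite_subset)
  show "multi_indices N \<subseteq> Pi\<^sub>E UNIV (\<lambda>_. {..N})"
    using multi_indices_le by (auto simp: PiE_UNIV_domain)
qed (auto intro: finite_PiE)

lemma zero_in_multi_indices: "(\<lambda>_. 0) \<in> multi_indices N"
  by (simp add: multi_indices_def mi_abs_def)

lemma mvec_norm_nonneg: "mvec_norm N m \<ge> 0"
  by (simp add: mvec_norm_def sum_nonneg)

lemma abs_le_mvec_norm:
  assumes "\<gamma> \<in> multi_indices N"
  shows "\<bar>m \<gamma>\<bar> \<le> mvec_norm N m"
proof -
  have "(m \<gamma>)\<^sup>2 \<le> (\<Sum>\<alpha>\<in>multi_indices N. (m \<alpha>)\<^sup>2)"
    using assms finite_multi_indices by (intro member_le_sum) auto
  then show ?thesis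
    unfolding mvec_norm_def multi_indices_def[symmetric] by (metis real_sqrt_abs real_sqrt_le_mono)
qed

text \<open>The coefficient of \<open>x^\<beta>\<close> in the expansion of \<open>(x + y)^\<alpha>\<close>.\<close>
definition translate_coeff :: "real^'n::finite \<Rightarrow> ('n \<Rightarrow> nat) \<Rightarrow> ('n \<Rightarrow> nat) \<Rightarrow> real" where
  "translate_coeff y \<alpha> \<beta> = (\<Prod>i\<in>UNIV. of_nat (\<alpha> i choose \<beta> i) * (y $ i) ^ (\<alpha> i - \<beta> i))"

lemma translate_coeff_inverse:
  assumes "\<alpha> \<in> multi_indices N"
  shows "(\<Sum>\<beta>\<in>multi_indices N. translate_coeff y \<alpha> \<beta> * translate_coeff (- y) \<beta> \<gamma>)
    = (if \<alpha> = \<gamma> then 1 else 0)"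
proof -
  let ?box = "Pi\<^sub>E UNIV (\<lambda>i. {..\<alpha> i})"
  have "?box \<subseteq> multi_indices N"
  proof
    fix \<beta> assume "\<beta> \<in> ?box"
    then have "mi_abs \<beta> \<le> mi_abs \<alpha>"
      unfolding mi_abs_def by (intro sum_mono) (auto simp: PiE_UNIV_domain)
    then show "\<beta> \<in> multi_indices N" using assms by (simp add: multi_indices_def)
  qed
  moreover have "translate_coeff y \<alpha> \<beta> = 0" if "\<beta> \<notin> ?box" for \<beta>
  proof -
    have "\<not> (\<forall>i. \<beta> i \<le> \<alpha> i)" using that by (auto simp: PiE_iff)
    then obtain i where "\<alpha> i < \<beta> i" by (auto simp: not_le)
    then show ?thesis unfolding translate_coeff_def by (intro prod_zero) (auto simp: binomial_eq_0)
  qed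
  ultimately have "(\<Sum>\<beta>\<in>multi_indices N. translate_coeff y \<alpha> \<beta> * translate_coeff (- y) \<beta> \<gamma>)
      = (\<Sum>\<beta>\<in>?box. translate_coeff y \<alpha> \<beta> * translate_coeff (- y) \<beta> \<gamma>)"
    by (intro sum.mono_neutral_right finite_multi_indices) auto
  also have "\<dots> = (\<Sum>\<beta>\<in>?box. \<Prod>i\<in>UNIV. of_nat (\<alpha> i choose \<beta> i) * (y $ i) ^ (\<alpha> i - \<beta> i)
      * (of_nat (\<beta> i choose \<gamma> i) * (- (y $ i)) ^ (\<beta> i - \<gamma> i)))"
    unfolding translate_coeff_def by (simp only: prod.distrib vector_uminus_component)
  also have "\<dots> = (\<Prod>i\<in>UNIV. \<Sum>b\<le>\<alpha> i. of_nat (\<alpha> i choose b) * (y $ i) ^ (\<alpha> i - b)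
      * (of_nat (b choose \<gamma> i) * (- (y $ i)) ^ (b - \<gamma> i)))"
    by (rule prod_sum_PiE[symmetric]) auto
  also have "\<dots> = (\<Prod>i\<in>UNIV. if \<alpha> i = \<gamma> i then 1 else 0)"
    by (simp only: binomial_inversion)
  also have "\<dots> = (if \<alpha> = \<gamma> then 1 else 0)"
    by (auto simp: fun_eq_iff intro: prod_zero)
  finally show ?thesis .
qed

lemma translate_coeff_bound:
  assumes "\<beta> \<in> multi_indices N"
  shows "\<bar>translate_coeff y \<beta> \<gamma>\<bar> \<le> (2 * (1 + norm y)) ^ N"
proof -
  have factor: "\<bar>of_nat (\<beta> i choose \<gamma> i) * (y $ i) ^ (\<beta> i - \<gamma> i)\<bar> \<le> (2 * (1 + norm y)) ^ \<beta> i" for i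
  proof -
    have "real (\<beta> i choose \<gamma> i) \<le> 2 ^ \<beta> i"
      using binomial_le_pow2[of "\<beta> i" "\<gamma> i"] by (metis of_nat_le_iff of_nat_numeral of_nat_power)
    moreover have "\<bar>y $ i\<bar> ^ (\<beta> i - \<gamma> i) \<le> (1 + norm y) ^ \<beta> i"
    proof -
      have "\<bar>y $ i\<bar> ^ (\<beta> i - \<gamma> i) \<le> (1 + norm y) ^ (\<beta> i - \<gamma> i)"
        using component_le_norm_cart[of y i] by (intro power_mono) auto
      also have "\<dots> \<le> (1 + norm y) ^ \<beta> i" by (intro power_increasing) auto
      finally show ?thesis .
    qed
    ultimately have "real (\<beta> i choose \<gamma> i) * \<bar>y $ i\<bar> ^ (\<beta> i - \<gamma> i) \<le> 2 ^ \<beta> i * (1 + norm y) ^ \<beta> i"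
      by (intro mult_mono) auto
    also have "\<dots> = (2 * (1 + norm y)) ^ \<beta> i"
      by (rule power_mult_distrib[symmetric])
    finally show ?thesis by (simp add: abs_mult power_abs)
  qed
  have "\<bar>translate_coeff y \<beta> \<gamma>\<bar> \<le> (\<Prod>i\<in>UNIV. (2 * (1 + norm y)) ^ \<beta> i)"
    unfolding translate_coeff_def abs_prod by (intro prod_mono conjI factor abs_ge_zero)
  also have "\<dots> = (2 * (1 + norm y)) ^ mi_abs \<beta>"
    by (simp add: mi_abs_def power_sum)
  also have "\<dots> \<le> (2 * (1 + norm y)) ^ N"
    using assms by (intro power_increasing) (auto simp: multi_indices_def)
  finally show ?thesis .
qed

definition dual_tensor :: "nat \<Rightarrow> real \<Rightarrow> real^'n::finite \<Rightarrow> ('n \<Rightarrow> nat) \<Rightarrow> real^'n \<Rightarrow> real" where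
  "dual_tensor N r y \<beta> x = (\<Prod>i\<in>UNIV. dual_profile N (\<beta> i) ((x $ i - y $ i) / r) / r ^ Suc (\<beta> i))"

lemma cart_smooth_dual_tensor: "cart.smooth (dual_tensor N r y \<beta>)"
  unfolding dual_tensor_def
proof (intro cart.smooth_prod)
  fix i
  let ?g = "\<lambda>t. dual_profile N (\<beta> i) ((t - y $ i) / r) / r ^ Suc (\<beta> i)"
  have affine: "?g = (\<lambda>t. inverse (r ^ Suc (\<beta> i)) * dual_profile N (\<beta> i) (inverse r * t + - (y $ i) / r))"
    by (simp add: fun_eq_iff divide_inverse algebra_simps)
  have "line.smooth ?g"
    using profile_dual_profile unfolding profile_def affine
    by (intro line.smooth_cmult line_smooth_affine) auto
  then show "cart.smooth (\<lambda>x. ?g (x $ i))"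
    by (rule cart_smooth_coordinate)
qed simp

lemma dual_tensor_eq_0:
  assumes "r > 0" and "x \<notin> cball y (3/4 * (real CARD('n) * r))"
  shows "dual_tensor N r y \<beta> (x::real^'n::finite) = 0"
proof (rule ccontr)
  assume nonzero: "dual_tensor N r y \<beta> x \<noteq> 0"
  have "\<bar>(x - y) $ i\<bar> \<le> 3/4 * r" for i
  proof -
    have "dual_profile N (\<beta> i) ((x $ i - y $ i) / r) \<noteq> 0"
      using nonzero unfolding dual_tensor_def by auto
    then have "(x $ i - y $ i) / r \<in> {0..3/4}"
      using profile_dual_profile unfolding profile_def by blast
    then show ?thesis using \<open>r > 0\<close> by (auto simp: field_simps)
  qed
  then have "norm (x - y) \<le> 3/4 * (real CARD('n) * r)"
    using norm_le_l1_cart[of "x - y"] sum_mono[of UNIV "\<lambda>i. \<bar>(x - y) $ i\<bar>" "\<lambda>_. 3/4 * r"]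
    by simp
  then show False using assms(2) by (simp add: dist_norm norm_minus_commute)
qed

lemma integral_mono_pow_dual_tensor:
  assumes "r > 0" and "\<alpha> \<in> multi_indices N"
  shows "(\<integral>x. mono_pow x \<alpha> * dual_tensor N r y \<beta> x \<partial>lborel) = translate_coeff y \<alpha> \<beta>"
proof -
  let ?f = "\<lambda>i t. t ^ \<alpha> i * (dual_profile N (\<beta> i) ((t - y $ i) / r) / r ^ Suc (\<beta> i))"
  have "integrable lborel (?f i)" for i
  proof (rule integrable_continuous_compact_support[of _ "{y $ i .. y $ i + r}"])
    have "continuous_on UNIV (\<lambda>t. dual_profile N (\<beta> i) ((t - y $ i) / r))"
      by (intro continuous_on_compose2[OF profile_continuous[OF profile_dual_profile]] continuous_intros)
        (use \<open>r > 0\<close> in auto)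
    then show "continuous_on UNIV (?f i)" using \<open>r > 0\<close> by (auto intro!: continuous_intros)
    show "?f i t = 0" if "t \<notin> {y $ i .. y $ i + r}" for t
    proof -
      have "(t - y $ i) / r \<notin> {0..3/4}" using that \<open>r > 0\<close> by (auto simp: field_simps)
      then show ?thesis using profile_dual_profile unfolding profile_def by simp
    qed
  qed auto
  then have "(\<integral>x. mono_pow x \<alpha> * dual_tensor N r y \<beta> x \<partial>lborel) = (\<Prod>i\<in>UNIV. integral\<^sup>L lborel (?f i))"
    unfolding mono_pow_def dual_tensor_def prod.distrib[symmetric] by (rule integral_prod_cart)
  also have "\<dots> = translate_coeff y \<alpha> \<beta>"
  proof -
    have "moment j (dual_profile N (\<beta> i)) = (if j = \<beta> i then 1 else 0)" if "j \<le> \<alpha> i" for i j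
      using that multi_indices_le[OF assms(2), of i] by (intro moment_dual_profile) simp
    then show ?thesis
      unfolding translate_coeff_def using \<open>r > 0\<close>
      by (intro prod.cong refl integral_power_translate_dual profile_dual_profile)
  qed
  finally show ?thesis .
qed

lemma dual_tensor_bound:
  assumes "0 < r" "r \<le> 1" and "\<beta> \<in> multi_indices N"
    and C: "\<And>l t. l \<le> N \<Longrightarrow> \<bar>dual_profile N l t\<bar> \<le> C"
  shows "\<bar>dual_tensor N r y \<beta> (x::real^'n::finite)\<bar> \<le> C ^ CARD('n) / r ^ (CARD('n) + N)"
proof -
  have "C \<ge> 0" using C[of 0 0] by simp
  have "\<bar>dual_tensor N r y \<beta> x\<bar> \<le> (\<Prod>i\<in>UNIV. C / r ^ Suc (\<beta> i))"
    unfolding dual_tensor_def abs_prod using assms multi_indices_le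
    by (intro prod_mono) (auto simp: abs_divide intro!: divide_right_mono C)
  also have "\<dots> = C ^ CARD('n) / r ^ (CARD('n) + mi_abs \<beta>)"
    by (simp add: prod_dividef prod.distrib power_sum power_add mi_abs_def)
  also have "\<dots> \<le> C ^ CARD('n) / r ^ (CARD('n) + N)"
    using assms \<open>C \<ge> 0\<close>
    by (intro divide_left_mono power_decreasing mult_pos_pos) (auto simp: multi_indices_def)
  finally show ?thesis .
qed

lemma dual_profiles_bounded: "\<exists>C>0. \<forall>l t. l \<le> N \<longrightarrow> \<bar>dual_profile N l t\<bar> \<le> C"
proof -
  obtain B where B: "\<And>l t. \<bar>dual_profile N l t\<bar> \<le> B l"
    using profile_bounded[OF profile_dual_profile] by metis
  have "\<bar>dual_profile N l t\<bar> \<le> 1 + (\<Sum>k\<le>N. \<bar>B k\<bar>)" if "l \<le> N" for l t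
  proof -
    have "B l \<le> (\<Sum>k\<le>N. \<bar>B k\<bar>)"
      using that member_le_sum[of l "{..N}" "\<lambda>k. \<bar>B k\<bar>"] by simp
    then show ?thesis using B[of l t] by simp
  qed
  moreover have "0 < 1 + (\<Sum>k\<le>N. \<bar>B k\<bar>)"
    by (simp add: add_pos_nonneg sum_nonneg)
  ultimately show ?thesis by blast
qed

definition moment_realizer ::
    "nat \<Rightarrow> real \<Rightarrow> real^'n::finite \<Rightarrow> (('n \<Rightarrow> nat) \<Rightarrow> real) \<Rightarrow> real^'n \<Rightarrow> real" where
  "moment_realizer N r y m x = (\<Sum>\<beta>\<in>multi_indices N.
     (\<Sum>\<gamma>\<in>multi_indices N. translate_coeff (- y) \<beta> \<gamma> * m \<gamma>) * dual_tensor N r y \<beta> x)"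

lemma moment_realizer_linear:
  "moment_realizer N r y (\<lambda>\<alpha>. a * m \<alpha> + b * m' \<alpha>)
    = (\<lambda>x. a * moment_realizer N r y m x + b * moment_realizer N r y m' x)"
  by (simp add: fun_eq_iff moment_realizer_def algebra_simps sum.distrib sum_distrib_left)

lemma cart_smooth_moment_realizer: "cart.smooth (moment_realizer N r y m)"
  unfolding moment_realizer_def
  by (intro cart.smooth_sum cart.smooth_cmult cart_smooth_dual_tensor finite_multi_indices)

lemma moment_realizer_eq_0:
  "r > 0 \<Longrightarrow> x \<notin> cball y (3/4 * (real CARD('n) * r)) \<Longrightarrow> moment_realizer N r y m (x::real^'n::finite) = 0"
  by (simp add: moment_realizer_def dual_tensor_eq_0)

lemma moment_realizer_in_Cc_inf:
  assumes "r > 0" "3/4 * (real CARD('n) * r) < \<epsilon>"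
  shows "moment_realizer N r (y::real^'n::finite) m \<in> Cc_inf (ball y \<epsilon>)"
  unfolding Cc_inf_def
proof (intro CollectI conjI exI[of _ "cball y (3/4 * (real CARD('n) * r))"])
  show "smooth_fun (moment_realizer N r y m)"
    by (simp add: smooth_fun_iff_cart_smooth cart_smooth_moment_realizer)
  show "cball y (3/4 * (real CARD('n) * r)) \<subseteq> ball y \<epsilon>"
    using assms(2) by auto
qed (use moment_realizer_eq_0[OF assms(1)] in auto)

lemma integral_mono_pow_moment_realizer:
  fixes y :: "real^'n::finite"
  assumes "r > 0" and \<alpha>: "\<alpha> \<in> multi_indices N"
  shows "integral UNIV (\<lambda>x. mono_pow x \<alpha> * moment_realizer N r y m x) = m \<alpha>"
proof -
  let ?B = "multi_indices N :: ('n \<Rightarrow> nat) set" and ?K = "cball y (3/4 * (real CARD('n) * r))"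
  let ?c = "\<lambda>\<beta>. \<Sum>\<gamma>\<in>?B. translate_coeff (- y) \<beta> \<gamma> * m \<gamma>"
  have mono_pow_continuous: "continuous_on UNIV (\<lambda>x. mono_pow x \<alpha>)"
    unfolding mono_pow_def by (intro continuous_intros)
  have integrable: "integrable lborel (\<lambda>x. mono_pow x \<alpha> * dual_tensor N r y \<beta> x)" for \<beta>
  proof (rule integrable_continuous_compact_support[of _ ?K])
    show "continuous_on UNIV (\<lambda>x. mono_pow x \<alpha> * dual_tensor N r y \<beta> x)"
      by (intro continuous_on_mult mono_pow_continuous cart.smooth_continuous cart_smooth_dual_tensor)
    show "mono_pow x \<alpha> * dual_tensor N r y \<beta> x = 0" if "x \<notin> ?K" for x
      using dual_tensor_eq_0[OF \<open>r > 0\<close> that] by simp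
  qed simp
  have expand: "(\<lambda>x. mono_pow x \<alpha> * moment_realizer N r y m x)
      = (\<lambda>x. \<Sum>\<beta>\<in>?B. ?c \<beta> * (mono_pow x \<alpha> * dual_tensor N r y \<beta> x))"
    by (simp add: fun_eq_iff moment_realizer_def sum_distrib_left mult_ac)
  have "integrable lborel (\<lambda>x. mono_pow x \<alpha> * moment_realizer N r y m x)"
    unfolding expand by (intro Bochner_Integration.integrable_sum integrable_mult_right integrable)
  then have "integral UNIV (\<lambda>x. mono_pow x \<alpha> * moment_realizer N r y m x)
      = (\<integral>x. mono_pow x \<alpha> * moment_realizer N r y m x \<partial>lborel)"
    by (rule integral_lborel)
  also have "\<dots> = (\<Sum>\<beta>\<in>?B. ?c \<beta> * (\<integral>x. mono_pow x \<alpha> * dual_tensor N r y \<beta> x \<partial>lborel))"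
    unfolding expand using integrable
    by (simp add: Bochner_Integration.integral_sum integrable_mult_right)
  also have "\<dots> = (\<Sum>\<beta>\<in>?B. \<Sum>\<gamma>\<in>?B. m \<gamma> * (translate_coeff y \<alpha> \<beta> * translate_coeff (- y) \<beta> \<gamma>))"
    unfolding integral_mono_pow_dual_tensor[OF assms] by (simp add: sum_distrib_left sum_distrib_right mult_ac)
  also have "\<dots> = (\<Sum>\<gamma>\<in>?B. m \<gamma> * (\<Sum>\<beta>\<in>?B. translate_coeff y \<alpha> \<beta> * translate_coeff (- y) \<beta> \<gamma>))"
    by (subst sum.swap) (simp add: sum_distrib_left)
  also have "\<dots> = m \<alpha>"
    using \<alpha> by (simp add: translate_coeff_inverse finite_multi_indices if_distrib cong: if_cong)
  finally show ?thesis .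
qed

lemma translated_moment_bound:
  fixes y :: "real^'n::finite"
  assumes "\<beta> \<in> multi_indices N"
  shows "\<bar>\<Sum>\<gamma>\<in>multi_indices N. translate_coeff y \<beta> \<gamma> * m \<gamma>\<bar>
    \<le> card (multi_indices N :: ('n \<Rightarrow> nat) set) * ((2 * (1 + norm y)) ^ N * mvec_norm N m)"
proof -
  have "\<bar>\<Sum>\<gamma>\<in>multi_indices N. translate_coeff y \<beta> \<gamma> * m \<gamma>\<bar>
      \<le> (\<Sum>\<gamma>\<in>multi_indices N. \<bar>translate_coeff y \<beta> \<gamma>\<bar> * \<bar>m \<gamma>\<bar>)"
    by (rule order_trans[OF sum_abs]) (simp add: abs_mult)
  also have "\<dots> \<le> (\<Sum>\<gamma>\<in>(multi_indices N :: ('n \<Rightarrow> nat) set). (2 * (1 + norm y)) ^ N * mvec_norm N m)"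
  proof (rule sum_mono)
    fix \<gamma> :: "'n \<Rightarrow> nat" assume "\<gamma> \<in> multi_indices N"
    then show "\<bar>translate_coeff y \<beta> \<gamma>\<bar> * \<bar>m \<gamma>\<bar> \<le> (2 * (1 + norm y)) ^ N * mvec_norm N m"
      using translate_coeff_bound[OF assms, of y \<gamma>] abs_le_mvec_norm[of \<gamma> N m]
      by (auto intro!: mult_mono)
  qed
  finally show ?thesis by simp
qed

lemma moment_realizer_bound:
  "\<exists>C>0. \<forall>r (y::real^'n::finite) m x. 0 < r \<and> r \<le> 1 \<longrightarrow>
     \<bar>moment_realizer N r y m x\<bar> \<le> C * (1 + norm y) ^ N / r ^ (CARD('n) + N) * mvec_norm N m"
proof -
  obtain C where C: "C > 0" "\<And>l t. l \<le> N \<Longrightarrow> \<bar>dual_profile N l t\<bar> \<le> C"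
    using dual_profiles_bounded by blast
  define n where "n = real (card (multi_indices N :: ('n \<Rightarrow> nat) set))"
  have "n > 0"
    using zero_in_multi_indices finite_multi_indices by (auto simp: n_def card_gt_0_iff)
  have "\<bar>moment_realizer N r y m x\<bar>
      \<le> n * n * 2 ^ N * C ^ CARD('n) * (1 + norm y) ^ N / r ^ (CARD('n) + N) * mvec_norm N m"
    if r: "0 < r" "r \<le> 1" for r and y :: "real^'n" and m x
  proof -
    let ?B = "multi_indices N :: ('n \<Rightarrow> nat) set"
    have "\<bar>moment_realizer N r y m x\<bar>
        \<le> (\<Sum>\<beta>\<in>?B. \<bar>\<Sum>\<gamma>\<in>?B. translate_coeff (- y) \<beta> \<gamma> * m \<gamma>\<bar> * \<bar>dual_tensor N r y \<beta> x\<bar>)"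
      unfolding moment_realizer_def by (rule order_trans[OF sum_abs]) (simp add: abs_mult)
    also have "\<dots> \<le> (\<Sum>\<beta>\<in>?B. n * ((2 * (1 + norm y)) ^ N * mvec_norm N m) * (C ^ CARD('n) / r ^ (CARD('n) + N)))"
      using translated_moment_bound[of _ N "- y" m] dual_tensor_bound[OF r _ C(2)]
        \<open>n > 0\<close> mvec_norm_nonneg[of N m]
      by (intro sum_mono mult_mono) (auto simp: n_def)
    also have "\<dots> = n * n * 2 ^ N * C ^ CARD('n) * (1 + norm y) ^ N / r ^ (CARD('n) + N) * mvec_norm N m"
      unfolding power_mult_distrib by (simp add: n_def)
    finally show ?thesis .
  qed
  moreover have "n * n * 2 ^ N * C ^ CARD('n) > 0" using \<open>n > 0\<close> C(1) by simp
  ultimately show ?thesis by blast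
qed

theorem mainTheorem5:
  fixes N :: nat
  shows "\<exists>p :: real poly. degree p = N \<and>
    (\<forall>(\<epsilon>::real) (y::real^'n::finite). 0 < \<epsilon> \<and> \<epsilon> \<le> 1 \<longrightarrow>
      (\<exists>\<Psi> :: (('n \<Rightarrow> nat) \<Rightarrow> real) \<Rightarrow> (real^'n \<Rightarrow> real).
         (\<forall>a b m m'. \<Psi> (\<lambda>\<alpha>. a * m \<alpha> + b * m' \<alpha>) = (\<lambda>x. a * \<Psi> m x + b * \<Psi> m' x)) \<and>
         (\<forall>m. \<Psi> m \<in> Cc_inf (ball y \<epsilon>)) \<and>
         (\<forall>m \<alpha>. mi_abs \<alpha> \<le> N \<longrightarrow> integral UNIV (\<lambda>x. mono_pow x \<alpha> * \<Psi> m x) = m \<alpha>) \<and>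
         (\<forall>m x. \<bar>\<Psi> m x\<bar> \<le> poly p (norm y) / \<epsilon> ^ (CARD('n) + N) * mvec_norm N m)))"
proof -
  define d where "d = real CARD('n)"
  have "d \<ge> 1" by (simp add: d_def)
  obtain C where C: "C > 0" "\<And>r (y::real^'n) m x. 0 < r \<Longrightarrow> r \<le> 1 \<Longrightarrow>
      \<bar>moment_realizer N r y m x\<bar> \<le> C * (1 + norm y) ^ N / r ^ (CARD('n) + N) * mvec_norm N m"
    using moment_realizer_bound by blast
  define p where "p = smult (C * d ^ (CARD('n) + N)) ([:1, 1:] ^ N)"
  show ?thesis
  proof (intro exI[of _ p] conjI allI impI)
    show "degree p = N" using C(1) \<open>d \<ge> 1\<close> by (simp add: p_def degree_linear_power)
    fix \<epsilon> :: real and y :: "real^'n"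
    assume \<epsilon>: "0 < \<epsilon> \<and> \<epsilon> \<le> 1"
    define r where "r = \<epsilon> / d"
    have "CARD('n) * r = \<epsilon>" using \<open>d \<ge> 1\<close> by (simp add: r_def d_def)
    then have r: "0 < r" "r \<le> 1" "3/4 * (real CARD('n) * r) < \<epsilon>"
      using \<epsilon> \<open>d \<ge> 1\<close> by (auto simp: r_def field_simps)
    have bound: "C * (1 + norm y) ^ N / r ^ (CARD('n) + N) = poly p (norm y) / \<epsilon> ^ (CARD('n) + N)"
      using \<epsilon> \<open>d \<ge> 1\<close> by (simp add: p_def r_def poly_power power_divide field_simps)
    show "\<exists>\<Psi>. (\<forall>a b m m'. \<Psi> (\<lambda>\<alpha>. a * m \<alpha> + b * m' \<alpha>) = (\<lambda>x. a * \<Psi> m x + b * \<Psi> m' x)) \<and>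
         (\<forall>m. \<Psi> m \<in> Cc_inf (ball y \<epsilon>)) \<and>
         (\<forall>m \<alpha>. mi_abs \<alpha> \<le> N \<longrightarrow> integral UNIV (\<lambda>x. mono_pow x \<alpha> * \<Psi> m x) = m \<alpha>) \<and>
         (\<forall>m x. \<bar>\<Psi> m x\<bar> \<le> poly p (norm y) / \<epsilon> ^ (CARD('n) + N) * mvec_norm N m)"
      using moment_realizer_linear moment_realizer_in_Cc_inf[OF r(1,3)]
        integral_mono_pow_moment_realizer[OF r(1)] C(2)[OF r(1,2), where y=y, unfolded bound]
      by (intro exI[of _ "moment_realizer N r y"]) (auto simp: multi_indices_def)
  qed
qed

end
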